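(* For every integer $m\ge1$ and all integers $a,b\ge 1$, $$M\big(\mathcal G(m,a)\,\mathcal G(m,-b)\big)=M\big(\mathcal G(m,a-1)\,\mathcal G(m,-(b-1))\big),$$ and $M\big(\mathcal G(m,-a)\,\mathcal G(m,-b)\big)=M\big(\mathcal G(m,-(a+b))\big)$ for all integers $a,b\ge 0$. (Here $\mathcal G(m,0)$ for the factor with $a-1=0$ is interpreted via the same definition as for $n\le 0$.)
   Context: Grid conventions: an $m$-by-$N$ grid has vertices $(i,j)$, $1\le i\le m$ (rows), $1\le j\le N$ (columns); horizontal edges join $(i,j),(i,j+1)$, vertical edges join $(i,j),(i+1,j)$. A signed graph is a graph each of whose edges carries a sign $+1$ or $-1$ (parallel edges allowed). For a signed graph $\mathcal G$, $M(\mathcal G)$ denotes the sum over all perfect matchings of $\mathcal G$ of the product of the signs of the edges in the matching. For $m\ge1$ and $n\ge 1$, $\mathcal G(m,n)$ is the $m$-by-$n$ grid graph with all edges of sign $+1$. For $n\le 0$, $\mathcal G(m,n)$ has the vertex set of the $m$-by-$(2-n)$ grid, all horizontal edges of that grid with sign $+1$, the vertical edges lying in columns $2,3,\dots,1-n$ with sign $-1$, and no vertical edges in columns $1$ and $2-n$. For signed graphs $\mathcal G_1,\mathcal G_2$ whose vertex sets are those of $m$-row grids, the adjoined graph $\mathcal G_1\mathcal G_2$ is obtained by placing $\mathcal G_1$ to the left of $\mathcal G_2$ and joining, for each row $i$, the rightmost vertex of row $i$ of $\mathcal G_1$ to the leftmost vertex of row $i$ of $\mathcal G_2$ by an edge of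 sign $+1$. *)

theory Defs
  imports Main
begin

text \<open>Vertices are pairs (row, column).  A signed graph is a vertex set together with a
list of signed edges (u, v, s); listing edges allows parallel edges.\<close>

type_synonym vertex = "nat \<times> nat"
type_synonym sedge = "vertex \<times> vertex \<times> int"
type_synonym sgraph = "vertex set \<times> sedge list"

definition grid_vertices :: "nat \<Rightarrow> nat \<Rightarrow> vertex set" where
  "grid_vertices m w = {1..m} \<times> {1..w}"

definition horiz_edges :: "nat \<Rightarrow> nat \<Rightarrow> sedge list" where
  "horiz_edges m w = [((i,j),(i,j+1),1). i \<leftarrow> [1..<m+1], j \<leftarrow> [1..<w]]"

definition vert_edges :: "nat \<Rightarrow> nat list \<Rightarrow> int \<Rightarrow> sedge list" where
  "vert_edges m cols s = [((i,j),(i+1,j),s). i \<leftarrow> [1..<m], j \<leftarrow> cols]"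

definition Gmn :: "nat \<Rightarrow> int \<Rightarrow> sgraph" where
  "Gmn m n =
    (if n \<ge> 1 then
       (grid_vertices m (nat n), horiz_edges m (nat n) @ vert_edges m [1..<nat n + 1] 1)
     else
       (grid_vertices m (nat (2 - n)),
        horiz_edges m (nat (2 - n)) @ vert_edges m [2..<nat (1 - n) + 1] (-1)))"

definition shift_v :: "nat \<Rightarrow> vertex \<Rightarrow> vertex" where
  "shift_v w v = (fst v, snd v + w)"

definition width :: "sgraph \<Rightarrow> nat" where
  "width G = Max (snd ` fst G)"

definition adjoin :: "nat \<Rightarrow> sgraph \<Rightarrow> sgraph \<Rightarrow> sgraph" where
  "adjoin m G1 G2 =
    (let w = width G1 in
     (fst G1 \<union> shift_v w ` fst G2,
      snd G1 @ map (\<lambda>(u,v,s). (shift_v w u, shift_v w v, s)) (snd G2)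
        @ [((i,w),(i,w+1),1). i \<leftarrow> [1..<m+1]]))"

definition is_perfect_matching :: "sgraph \<Rightarrow> nat set \<Rightarrow> bool" where
  "is_perfect_matching G S \<longleftrightarrow>
     S \<subseteq> {..<length (snd G)} \<and>
     (\<forall>k\<in>S. fst (snd G ! k) \<in> fst G \<and> fst (snd (snd G ! k)) \<in> fst G) \<and>
     (\<forall>v\<in>fst G. card {k\<in>S. fst (snd G ! k) = v \<or> fst (snd (snd G ! k)) = v} = 1)"

definition Msum :: "sgraph \<Rightarrow> int" where
  "Msum G = (\<Sum>S\<in>{S. is_perfect_matching G S}. \<Prod>k\<in>S. snd (snd (snd G ! k)))"

end

theory Submission
  imports Defs
begin

text \<open>
  Transfer matrices. Scan a grid-shaped signed graph column by column; on reaching a column, the state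
  is the set R of rows whose vertex there is still unmatched. Each such vertex is matched either to
  the next column (rows B) or vertically, and the vertical part R - B can only be covered by pairs of
  consecutive rows, with weight s per pair if the vertical edges of the column have sign s. So M is
  obtained by applying one operator T_s per column, and adjoining grids concatenates their words of
  column signs: G(m,n) has the word 1^n for n \<ge> 1 and 0 (-1)^(-n) 0 for n \<le> 0, where 0 stands for a
  column without vertical edges. Now T_s = P_s C, where C complements the state in {1..m} and P_s is
  subset convolution with the pairing weights. Since C C = id, P_0 = id and P_s P_t = P_(s+t), we get
  T_s T_0 T_t = T_(s+t). The two identities of the theorem follow by rewriting 1 0 (-1) to 0 and
  s 0 0 to s in the words.
\<close>

section \<open>Pairing weights\<close>

text \<open>The signed count of the matchings of the rows X of one column by vertical edges of sign s:
  the lowest row has to be matched with the next one.\<close>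
function pairing_weight :: "int \<Rightarrow> nat set \<Rightarrow> int" where
  "pairing_weight s X =
     (if X = {} \<or> infinite X then 1
      else if Suc (Min X) \<in> X then s * pairing_weight s (X - {Min X, Suc (Min X)}) else 0)"
  by auto
termination
  by (relation "measure (\<lambda>(s, X). card X)") (simp_all add: card_gt_0_iff)

declare pairing_weight.simps [simp del]

lemma pairing_weight_empty [simp]: "pairing_weight s {} = 1"
  by (simp add: pairing_weight.simps)

lemma pairing_weight_Min:
  assumes "finite X" "i \<in> X" "\<forall>x\<in>X. i \<le> x"
  shows "pairing_weight s X = (if Suc i \<in> X then s * pairing_weight s (X - {i, Suc i}) else 0)"
proof -
  have "Min X = i"
    using assms by (simp add: Min_eqI)
  then show ?thesis
    using assms by (subst pairing_weight.simps) auto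
qed

lemma pairing_weight_insert_pair:
  assumes "finite Y" "\<forall>y\<in>Y. Suc i < y"
  shows "pairing_weight s (insert i (insert (Suc i) Y)) = s * pairing_weight s Y"
proof -
  have "insert i (insert (Suc i) Y) - {i, Suc i} = Y"
    using assms(2) by auto
  then show ?thesis
    using assms by (subst pairing_weight_Min[where i = i]) auto
qed

lemma pairing_weight_insert_single:
  assumes "finite Y" "\<forall>y\<in>Y. Suc i < y"
  shows "pairing_weight s (insert i Y) = 0"
  using assms by (subst pairing_weight_Min[where i = i]) auto

lemma pairing_weight_zero: "finite X \<Longrightarrow> pairing_weight 0 X = of_bool (X = {})"
  by (subst pairing_weight.simps) auto

lemma sum_Pow_insert:
  assumes "finite A" "a \<notin> A"
  shows "(\<Sum>Y\<in>Pow (insert a A). f Y) = (\<Sum>Y\<in>Pow A. f Y) + (\<Sum>Y\<in>Pow A. f (insert a Y))"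
proof -
  have "inj_on (insert a) (Pow A)"
    using assms(2) by (intro inj_onI) (metis Diff_insert_absorb PowD subsetD)
  then show ?thesis
    unfolding Pow_insert using assms
    by (subst sum.union_disjoint) (auto simp: sum.reindex)
qed

lemma pairing_weight_convolution_unpaired:
  assumes "finite X" "i \<in> X" "\<forall>x\<in>X. i \<le> x" "Suc i \<notin> X" "Y \<subseteq> X"
  shows "pairing_weight s (X - Y) * pairing_weight t Y = 0"
proof (cases "i \<in> Y")
  case True
  then have "pairing_weight t Y = 0"
    using assms finite_subset[of Y X] by (subst pairing_weight_Min[where i = i]) auto
  then show ?thesis
    by simp
next
  case False
  then have "pairing_weight s (X - Y) = 0"
    using assms by (subst pairing_weight_Min[where i = i]) auto
  then show ?thesis
    by simp
qed

lemma pairing_weight_convolution_pair: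
  assumes fin: "finite X" and gt: "\<forall>x\<in>X. Suc i < x"
  defines "P \<equiv> insert i (insert (Suc i) X)"
  shows "(\<Sum>Y\<in>Pow P. pairing_weight s (P - Y) * pairing_weight t Y)
    = (s + t) * (\<Sum>Y\<in>Pow X. pairing_weight s (X - Y) * pairing_weight t Y)"
proof -
  define f where "f Y = pairing_weight s (P - Y) * pairing_weight t Y" for Y
  define g where "g Y = pairing_weight s (X - Y) * pairing_weight t Y" for Y
  have "i \<notin> insert (Suc i) X" "Suc i \<notin> X"
    using gt by auto
  then have "sum f (Pow P) = sum f (Pow X) + sum (\<lambda>Y. f (insert (Suc i) Y)) (Pow X)
      + (sum (\<lambda>Y. f (insert i Y)) (Pow X) + sum (\<lambda>Y. f (insert i (insert (Suc i) Y))) (Pow X))"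
    using fin by (simp add: P_def sum_Pow_insert)
  also have "\<dots> = (\<Sum>Y\<in>Pow X. s * g Y) + (\<Sum>Y\<in>Pow X. t * g Y)"
  proof -
    have pw: "pairing_weight r (insert i (insert (Suc i) Z)) = r * pairing_weight r Z"
      "pairing_weight r (insert i Z) = 0" if "Z \<subseteq> X" for r Z
      using that gt finite_subset[OF that fin]
      by (auto intro!: pairing_weight_insert_pair pairing_weight_insert_single)
    have "f Y = s * g Y" "f (insert (Suc i) Y) = 0" "f (insert i Y) = 0"
      "f (insert i (insert (Suc i) Y)) = t * g Y" if "Y \<in> Pow X" for Y
    proof -
      have "P - Y = insert i (insert (Suc i) (X - Y))"
        "P - insert (Suc i) Y = insert i (X - Y)" "P - insert i (insert (Suc i) Y) = X - Y"
        using that gt unfolding P_def by fastforce+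
      then show "f Y = s * g Y" "f (insert (Suc i) Y) = 0" "f (insert i Y) = 0"
        "f (insert i (insert (Suc i) Y)) = t * g Y"
        using that pw[of "X - Y"] pw[of Y] by (auto simp: f_def g_def)
    qed
    then show ?thesis
      by (simp add: sum.neutral)
  qed
  also have "\<dots> = (s + t) * sum g (Pow X)"
    by (simp add: sum_distrib_left distrib_right sum.distrib)
  finally show ?thesis
    by (simp add: f_def g_def)
qed

lemma pairing_weight_convolution:
  assumes "finite X"
  shows "(\<Sum>Y\<in>Pow X. pairing_weight s (X - Y) * pairing_weight t Y) = pairing_weight (s + t) X"
  using assms
proof (induction "card X" arbitrary: X rule: less_induct)
  case less
  show ?case
  proof (cases "X = {}")
    case False
    define i where "i = Min X"
    have iX: "i \<in> X" and i_min: "\<forall>x\<in>X. i \<le> x"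
      using False less.prems by (auto simp: i_def)
    show ?thesis
    proof (cases "Suc i \<in> X")
      case False
      then show ?thesis
        using iX i_min less.prems pairing_weight_convolution_unpaired[OF less.prems iX i_min False]
        by (simp add: pairing_weight_Min[where i = i] sum.neutral)
    next
      case True
      define X' where "X' = X - {i, Suc i}"
      have fin: "finite X'" and gt: "\<forall>x\<in>X'. Suc i < x"
        using less.prems i_min by (auto simp: X'_def)
      have X: "X = insert i (insert (Suc i) X')"
        using iX True by (auto simp: X'_def)
      have "card X' < card X"
        using less.prems iX by (intro psubset_card_mono) (auto simp: X'_def)
      then have "(\<Sum>Y\<in>Pow X'. pairing_weight s (X' - Y) * pairing_weight t Y) = pairing_weight (s + t) X'"
        using less.hyps fin by simp
      then show ?thesis
        using pairing_weight_convolution_pair[OF fin gt, of s t] fin gt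
        by (simp add: X pairing_weight_insert_pair)
    qed
  qed simp
qed

section \<open>Transfer operators\<close>

definition pair_conv :: "int \<Rightarrow> (nat set \<Rightarrow> int) \<Rightarrow> nat set \<Rightarrow> int" where
  "pair_conv s f R = (\<Sum>B\<in>Pow R. pairing_weight s (R - B) * f B)"

lemma pair_conv_infinite: "infinite R \<Longrightarrow> pair_conv s f R = 0"
  by (simp add: pair_conv_def)

lemma pair_conv_zero:
  assumes "finite R"
  shows "pair_conv 0 f R = f R"
proof -
  have "pair_conv 0 f R = (\<Sum>B\<in>Pow R. if B = R then f B else 0)"
    unfolding pair_conv_def using assms
    by (intro sum.cong) (auto simp: pairing_weight_zero)
  then show ?thesis
    using assms by simp
qed

lemma pair_conv_cong_finite:
  assumes "\<And>X. finite X \<Longrightarrow> f X = g X"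
  shows "pair_conv s f = pair_conv s g"
proof
  fix R
  show "pair_conv s f R = pair_conv s g R"
  proof (cases "finite R")
    case True
    then show ?thesis
      unfolding pair_conv_def by (intro sum.cong refl) (simp add: assms finite_subset[of _ R])
  qed (simp add: pair_conv_infinite)
qed

lemma pairing_weight_convolution_between:
  assumes "finite R" "C \<subseteq> R"
  shows "(\<Sum>B | C \<subseteq> B \<and> B \<subseteq> R. pairing_weight s (R - B) * pairing_weight t (B - C))
    = pairing_weight (s + t) (R - C)"
proof -
  have "bij_betw (\<lambda>Y. C \<union> Y) (Pow (R - C)) {B. C \<subseteq> B \<and> B \<subseteq> R}"
    using assms(2) by (intro bij_betw_byWitness[where f' = "\<lambda>B. B - C"]) auto
  then have "(\<Sum>B | C \<subseteq> B \<and> B \<subseteq> R. pairing_weight s (R - B) * pairing_weight t (B - C))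
      = (\<Sum>Y\<in>Pow (R - C). pairing_weight s (R - (C \<union> Y)) * pairing_weight t (C \<union> Y - C))"
    by (simp add: sum.reindex_bij_betw [symmetric])
  also have "\<dots> = (\<Sum>Y\<in>Pow (R - C). pairing_weight s (R - C - Y) * pairing_weight t Y)"
  proof (intro sum.cong refl)
    fix Y
    assume "Y \<in> Pow (R - C)"
    then have "R - (C \<union> Y) = R - C - Y" "C \<union> Y - C = Y"
      by auto
    then show "pairing_weight s (R - (C \<union> Y)) * pairing_weight t (C \<union> Y - C)
      = pairing_weight s (R - C - Y) * pairing_weight t Y"
      by simp
  qed
  also have "\<dots> = pairing_weight (s + t) (R - C)"
    using assms(1) by (simp add: pairing_weight_convolution)
  finally show ?thesis .
qed

lemma pair_conv_pair_conv: "pair_conv s (pair_conv t f) = pair_conv (s + t) f"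
proof
  fix R
  show "pair_conv s (pair_conv t f) R = pair_conv (s + t) f R"
  proof (cases "finite R")
    case True
    have "pair_conv s (pair_conv t f) R
        = (\<Sum>B\<in>Pow R. \<Sum>C\<in>Pow B. pairing_weight s (R - B) * pairing_weight t (B - C) * f C)"
      by (simp add: pair_conv_def sum_distrib_left mult.assoc)
    also have "\<dots> = (\<Sum>B\<in>Pow R. \<Sum>C | C \<in> Pow R \<and> C \<subseteq> B.
        pairing_weight s (R - B) * pairing_weight t (B - C) * f C)"
      by (intro sum.cong) auto
    also have "\<dots> = (\<Sum>C\<in>Pow R. \<Sum>B | B \<in> Pow R \<and> C \<subseteq> B.
        pairing_weight s (R - B) * pairing_weight t (B - C) * f C)"
      using True by (intro sum.swap_restrict) auto
    also have "\<dots> = (\<Sum>C\<in>Pow R. \<Sum>B | C \<subseteq> B \<and> B \<subseteq> R.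
        pairing_weight s (R - B) * pairing_weight t (B - C) * f C)"
      by (intro sum.cong) (auto intro: sum.cong)
    also have "\<dots> = (\<Sum>C\<in>Pow R. pairing_weight (s + t) (R - C) * f C)"
      using True by (simp add: sum_distrib_right [symmetric] pairing_weight_convolution_between)
    finally show ?thesis
      by (simp add: pair_conv_def)
  qed (simp add: pair_conv_infinite)
qed

text \<open>Symmetric difference rather than complement, so that complementing twice is the identity on
  all sets and not only on subsets of {1..m}.\<close>

definition compl_rows :: "nat \<Rightarrow> (nat set \<Rightarrow> int) \<Rightarrow> nat set \<Rightarrow> int" where
  "compl_rows m f X = f (sym_diff X {1..m})"

definition transfer :: "nat \<Rightarrow> int \<Rightarrow> (nat set \<Rightarrow> int) \<Rightarrow> nat set \<Rightarrow> int" where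
  "transfer m s f = pair_conv s (compl_rows m f)"

lemma transfer_subset:
  assumes "R \<subseteq> {1..m}"
  shows "transfer m s f R = (\<Sum>B\<in>Pow R. pairing_weight s (R - B) * f ({1..m} - B))"
proof -
  have "sym_diff B {1..m} = {1..m} - B" if "B \<in> Pow R" for B
    using that assms by auto
  then show ?thesis
    by (simp add: transfer_def pair_conv_def compl_rows_def)
qed

text \<open>Seen through the complementation in transfer: no vertex of the last column is matched to the
  right.\<close>

definition full_rows :: "nat \<Rightarrow> nat set \<Rightarrow> int" where
  "full_rows m X = of_bool (X = {1..m})"

lemma transfer_full_rows:
  assumes "R \<subseteq> {1..m}"
  shows "transfer m s (full_rows m) R = pairing_weight s R"
proof -
  have "transfer m s (full_rows m) R = (\<Sum>B\<in>Pow R. if B = {} then pairing_weight s R else 0)"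
    unfolding transfer_subset[OF assms] full_rows_def
  proof (intro sum.cong refl)
    fix B
    assume "B \<in> Pow R"
    then have "{1..m} - B = {1..m} \<longleftrightarrow> B = {}"
      using assms by auto
    then show "pairing_weight s (R - B) * of_bool ({1..m} - B = {1..m}) =
      (if B = {} then pairing_weight s R else 0)"
      by simp
  qed
  also have "\<dots> = pairing_weight s R"
    using assms finite_subset[of R "{1..m}"] by simp
  finally show ?thesis .
qed

lemma transfer_collapse: "transfer m s (transfer m 0 (transfer m t f)) = transfer m (s + t) f"
proof -
  have "compl_rows m (pair_conv 0 (compl_rows m g)) X = g X" if "finite X" for g X
  proof -
    have "sym_diff (sym_diff X {1..m}) {1..m} = X"
      by auto
    then show ?thesis
      using that by (simp add: compl_rows_def pair_conv_zero)
  qed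
  then have "transfer m s (transfer m 0 g) = pair_conv s g" for g
    unfolding transfer_def by (intro pair_conv_cong_finite)
  then show ?thesis
    by (simp add: transfer_def pair_conv_pair_conv)
qed

lemma foldr_transfer_collapse:
  "foldr (transfer m) (xs @ s # 0 # t # ys) f = foldr (transfer m) (xs @ (s + t) # ys) f"
  by (simp add: transfer_collapse)

lemma foldr_transfer_drop_zeros:
  assumes "xs \<noteq> []"
  shows "foldr (transfer m) (xs @ 0 # 0 # ys) f = foldr (transfer m) (xs @ ys) f"
proof -
  obtain ys' s where "xs = ys' @ [s]"
    using assms by (cases xs rule: rev_cases) auto
  then show ?thesis
    using foldr_transfer_collapse[of m ys' s 0 ys f] by simp
qed

section \<open>Expanding the matching sum along a vertex\<close>

abbreviation end1 :: "sedge list \<Rightarrow> nat \<Rightarrow> vertex" where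
  "end1 E k \<equiv> fst (E ! k)"

abbreviation end2 :: "sedge list \<Rightarrow> nat \<Rightarrow> vertex" where
  "end2 E k \<equiv> fst (snd (E ! k))"

abbreviation edge_sign :: "sedge list \<Rightarrow> nat \<Rightarrow> int" where
  "edge_sign E k \<equiv> snd (snd (E ! k))"

definition perfect_matchings :: "vertex set \<Rightarrow> sedge list \<Rightarrow> nat set set" where
  "perfect_matchings V E = {S. is_perfect_matching (V, E) S}"

lemma in_perfect_matchings_iff:
  "S \<in> perfect_matchings V E \<longleftrightarrow> S \<subseteq> {..<length E} \<and> (\<forall>k\<in>S. end1 E k \<in> V \<and> end2 E k \<in> V) \<and>
     (\<forall>x\<in>V. card {k\<in>S. end1 E k = x \<or> end2 E k = x} = 1)"
  by (simp add: perfect_matchings_def is_perfect_matching_def)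

lemma Msum_eq_sum_perfect_matchings: "Msum (V, E) = (\<Sum>S\<in>perfect_matchings V E. \<Prod>k\<in>S. edge_sign E k)"
  by (simp add: Msum_def perfect_matchings_def)

lemma finite_perfect_matchings: "finite (perfect_matchings V E)"
  by (rule finite_subset[of _ "Pow {..<length E}"]) (auto simp: in_perfect_matchings_iff)

lemma Msum_no_vertices: "Msum ({}, E) = 1"
proof -
  have "perfect_matchings {} E = {{}}"
    by (auto simp: in_perfect_matchings_iff)
  then show ?thesis
    by (simp add: Msum_eq_sum_perfect_matchings)
qed

lemma perfect_matching_unique_edge:
  assumes "S \<in> perfect_matchings V E" "x \<in> V"
    and "k \<in> S" "end1 E k = x \<or> end2 E k = x" "k' \<in> S" "end1 E k' = x \<or> end2 E k' = x"
  shows "k = k'"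
proof -
  have "card {j\<in>S. end1 E j = x \<or> end2 E j = x} = 1"
    using assms(1,2) by (simp add: in_perfect_matchings_iff)
  then obtain j where "{j\<in>S. end1 E j = x \<or> end2 E j = x} = {j}"
    by (rule card_1_singletonE)
  moreover have "k \<in> {j\<in>S. end1 E j = x \<or> end2 E j = x}" "k' \<in> {j\<in>S. end1 E j = x \<or> end2 E j = x}"
    using assms(3-) by auto
  ultimately show ?thesis
    by (metis singletonD)
qed

lemma perfect_matching_Diff_edge:
  assumes S: "S \<in> perfect_matchings V E" and k: "k \<in> S"
  shows "S - {k} \<in> perfect_matchings (V - {end1 E k, end2 E k}) E"
proof -
  have ends: "end1 E k \<in> V" "end2 E k \<in> V"
    using S k by (auto simp: in_perfect_matchings_iff)
  have "end1 E j \<notin> {end1 E k, end2 E k} \<and> end2 E j \<notin> {end1 E k, end2 E k}" if "j \<in> S - {k}" for j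
    using that perfect_matching_unique_edge[OF S ends(1) k _ _]
      perfect_matching_unique_edge[OF S ends(2) k _ _] by auto
  moreover have "{j\<in>S - {k}. end1 E j = x \<or> end2 E j = x} = {j\<in>S. end1 E j = x \<or> end2 E j = x}"
    if "x \<notin> {end1 E k, end2 E k}" for x
    using that by auto
  ultimately show ?thesis
    using S by (auto simp: in_perfect_matchings_iff)
qed

lemma perfect_matching_insert_edge:
  assumes k: "k < length E" "end1 E k \<in> V" "end2 E k \<in> V"
    and S: "S \<in> perfect_matchings (V - {end1 E k, end2 E k}) E"
  shows "insert k S \<in> perfect_matchings V E"
proof -
  have S_ends: "\<forall>j\<in>S. end1 E j \<in> V - {end1 E k, end2 E k} \<and> end2 E j \<in> V - {end1 E k, end2 E k}"
    using S by (simp add: in_perfect_matchings_iff)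
  have "card {j\<in>insert k S. end1 E j = x \<or> end2 E j = x} = 1" if "x \<in> V" for x
  proof (cases "x \<in> {end1 E k, end2 E k}")
    case True
    then have "{j\<in>insert k S. end1 E j = x \<or> end2 E j = x} = {k}"
      using S_ends by auto
    then show ?thesis
      by simp
  next
    case False
    then have "{j\<in>insert k S. end1 E j = x \<or> end2 E j = x} = {j\<in>S. end1 E j = x \<or> end2 E j = x}"
      by auto
    then show ?thesis
      using S that False by (simp add: in_perfect_matchings_iff)
  qed
  then show ?thesis
    using S S_ends k by (auto simp: in_perfect_matchings_iff)
qed

definition incident_edges :: "sedge list \<Rightarrow> vertex set \<Rightarrow> vertex \<Rightarrow> nat set" where
  "incident_edges E V v =
     {k. k < length E \<and> (end1 E k = v \<or> end2 E k = v) \<and> end1 E k \<in> V \<and> end2 E k \<in> V}"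

lemma finite_incident_edges: "finite (incident_edges E V v)"
  by (simp add: incident_edges_def)

lemma perfect_matching_incident_edge:
  assumes S: "S \<in> perfect_matchings V E" and v: "v \<in> V"
  obtains k where "k \<in> S" "k \<in> incident_edges E V v"
proof -
  have "card {k\<in>S. end1 E k = v \<or> end2 E k = v} = 1"
    using S v by (simp add: in_perfect_matchings_iff)
  then obtain k where "{k\<in>S. end1 E k = v \<or> end2 E k = v} = {k}"
    by (rule card_1_singletonE)
  then have "k \<in> S" "end1 E k = v \<or> end2 E k = v"
    by blast+
  moreover from this have "k \<in> incident_edges E V v"
    using S by (auto simp: incident_edges_def in_perfect_matchings_iff)
  ultimately show ?thesis
    using that by blast
qed

lemma perfect_matchings_split_at_vertex:
  assumes v: "v \<in> V"
  shows "bij_betw (\<lambda>(k, S). insert k S)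
    (SIGMA k:incident_edges E V v. perfect_matchings (V - {end1 E k, end2 E k}) E) (perfect_matchings V E)"
proof (rule bij_betw_imageI)
  have avoid: "k \<notin> S" "\<forall>j\<in>S. end1 E j \<noteq> v \<and> end2 E j \<noteq> v"
    if "k \<in> incident_edges E V v" "S \<in> perfect_matchings (V - {end1 E k, end2 E k}) E" for k S
    using that by (auto simp: incident_edges_def in_perfect_matchings_iff)
  show "inj_on (\<lambda>(k, S). insert k S)
    (SIGMA k:incident_edges E V v. perfect_matchings (V - {end1 E k, end2 E k}) E)"
  proof (rule inj_onI, clarsimp)
    fix k1 S1 k2 S2
    assume 1: "k1 \<in> incident_edges E V v" "S1 \<in> perfect_matchings (V - {end1 E k1, end2 E k1}) E"
      and 2: "k2 \<in> incident_edges E V v" "S2 \<in> perfect_matchings (V - {end1 E k2, end2 E k2}) E"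
      and eq: "insert k1 S1 = insert k2 S2"
    have k: "k1 = k2"
      using eq avoid[OF 2] 1(1) by (auto simp: incident_edges_def)
    have "S1 = insert k1 S1 - {k1}"
      using avoid[OF 1] by auto
    also have "\<dots> = insert k2 S2 - {k2}"
      using eq k by simp
    also have "\<dots> = S2"
      using avoid[OF 2] by auto
    finally show "k1 = k2 \<and> S1 = S2"
      using k by simp
  qed
  show "(\<lambda>(k, S). insert k S) `
    (SIGMA k:incident_edges E V v. perfect_matchings (V - {end1 E k, end2 E k}) E) = perfect_matchings V E"
  proof (intro equalityI subsetI)
    fix S
    assume "S \<in> (\<lambda>(k, S). insert k S) `
      (SIGMA k:incident_edges E V v. perfect_matchings (V - {end1 E k, end2 E k}) E)"
    then show "S \<in> perfect_matchings V E"
      by (auto simp: incident_edges_def intro: perfect_matching_insert_edge)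
  next
    fix S
    assume S: "S \<in> perfect_matchings V E"
    then obtain k where "k \<in> S" "k \<in> incident_edges E V v"
      using v by (rule perfect_matching_incident_edge)
    then show "S \<in> (\<lambda>(k, S). insert k S) `
      (SIGMA k:incident_edges E V v. perfect_matchings (V - {end1 E k, end2 E k}) E)"
      using perfect_matching_Diff_edge[OF S] by (intro image_eqI[of _ _ "(k, S - {k})"]) auto
  qed
qed

lemma Msum_expand_incident_edges:
  assumes "v \<in> V"
  shows "Msum (V, E) =
    (\<Sum>k\<in>incident_edges E V v. edge_sign E k * Msum (V - {end1 E k, end2 E k}, E))"
proof -
  have "edge_sign E k * Msum (V - {end1 E k, end2 E k}, E) =
      (\<Sum>S\<in>perfect_matchings (V - {end1 E k, end2 E k}) E. \<Prod>j\<in>insert k S. edge_sign E j)"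
    if "k \<in> incident_edges E V v" for k
  proof -
    have "k \<notin> S \<and> finite S" if "S \<in> perfect_matchings (V - {end1 E k, end2 E k}) E" for S
      using that \<open>k \<in> incident_edges E V v\<close>
      by (auto simp: incident_edges_def in_perfect_matchings_iff intro: finite_subset)
    then show ?thesis
      by (simp add: Msum_eq_sum_perfect_matchings sum_distrib_left)
  qed
  then have "(\<Sum>k\<in>incident_edges E V v. edge_sign E k * Msum (V - {end1 E k, end2 E k}, E))
    = (\<Sum>(k, S)\<in>(SIGMA k:incident_edges E V v. perfect_matchings (V - {end1 E k, end2 E k}) E).
        \<Prod>j\<in>insert k S. edge_sign E j)"
    by (simp add: sum.Sigma finite_incident_edges finite_perfect_matchings)
  also have "\<dots> = Msum (V, E)"
    using sum.reindex_bij_betw[OF perfect_matchings_split_at_vertex[OF assms],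
        of "\<lambda>S. \<Prod>j\<in>S. edge_sign E j"]
    by (simp add: Msum_eq_sum_perfect_matchings case_prod_unfold)
  finally show ?thesis ..
qed

definition edge_weight :: "sedge list \<Rightarrow> vertex \<Rightarrow> vertex \<Rightarrow> int" where
  "edge_weight E v u =
     (\<Sum>e\<leftarrow>E. if (fst e = v \<and> fst (snd e) = u) \<or> (fst e = u \<and> fst (snd e) = v) then snd (snd e) else 0)"

lemma edge_weight_conv_nth:
  "edge_weight E v u = (\<Sum>k<length E.
     if (end1 E k = v \<and> end2 E k = u) \<or> (end1 E k = u \<and> end2 E k = v) then edge_sign E k else 0)"
  by (simp add: edge_weight_def sum_list_sum_nth atLeast0LessThan)

definition loopless :: "sedge list \<Rightarrow> bool" where
  "loopless E \<longleftrightarrow> (\<forall>e\<in>set E. fst e \<noteq> fst (snd e))"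

lemma Msum_expand_vertex:
  assumes "finite V" "v \<in> V" "loopless E"
  shows "Msum (V, E) = (\<Sum>u\<in>V - {v}. edge_weight E v u * Msum (V - {v, u}, E))"
proof -
  define other where "other k = (if end1 E k = v then end2 E k else end1 E k)" for k
  have other: "other k \<in> V - {v}" "{end1 E k, end2 E k} = {v, other k}"
    if k: "k \<in> incident_edges E V v" for k
  proof -
    have "end1 E k \<noteq> end2 E k"
      using assms(3) nth_mem[of k E] k by (auto simp: loopless_def incident_edges_def)
    then show "other k \<in> V - {v}" "{end1 E k, end2 E k} = {v, other k}"
      using k by (auto simp: other_def incident_edges_def)
  qed
  have other_image: "other ` incident_edges E V v \<subseteq> V - {v}"
    using other(1) by blast
  have "Msum (V, E) = (\<Sum>k\<in>incident_edges E V v. edge_sign E k * Msum (V - {v, other k}, E))"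
    unfolding Msum_expand_incident_edges[OF assms(2)] by (intro sum.cong refl) (simp add: other(2))
  also have "\<dots> = (\<Sum>u\<in>V - {v}. \<Sum>k | k \<in> incident_edges E V v \<and> other k = u.
      edge_sign E k * Msum (V - {v, other k}, E))"
    by (rule sum.group [symmetric, OF finite_incident_edges _ other_image]) (simp add: assms(1))
  also have "\<dots> = (\<Sum>u\<in>V - {v}. edge_weight E v u * Msum (V - {v, u}, E))"
  proof (intro sum.cong refl)
    fix u
    assume u: "u \<in> V - {v}"
    then have set_eq: "{k. k \<in> incident_edges E V v \<and> other k = u} = {k \<in> {..<length E}.
        (end1 E k = v \<and> end2 E k = u) \<or> (end1 E k = u \<and> end2 E k = v)}"
      using assms(2) by (auto simp: incident_edges_def other_def)
    have "(\<Sum>k | k \<in> incident_edges E V v \<and> other k = u. edge_sign E k * Msum (V - {v, other k}, E))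
      = (\<Sum>k | k \<in> incident_edges E V v \<and> other k = u. edge_sign E k * Msum (V - {v, u}, E))"
      by (intro sum.cong) auto
    also have "\<dots> = edge_weight E v u * Msum (V - {v, u}, E)"
      unfolding set_eq sum.inter_filter[OF finite_lessThan] edge_weight_conv_nth sum_distrib_right
      by (intro sum.cong) auto
    finally show "(\<Sum>k | k \<in> incident_edges E V v \<and> other k = u.
      edge_sign E k * Msum (V - {v, other k}, E)) = edge_weight E v u * Msum (V - {v, u}, E)" .
  qed
  finally show ?thesis .
qed

section \<open>Grids with column signs\<close>

definition grid_weight :: "(nat \<Rightarrow> int) \<Rightarrow> vertex \<Rightarrow> vertex \<Rightarrow> int" where
  "grid_weight \<sigma> v u =
     (if fst v = fst u \<and> (snd u = snd v + 1 \<or> snd v = snd u + 1) then 1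
      else if snd v = snd u \<and> (fst u = fst v + 1 \<or> fst v = fst u + 1) then \<sigma> (snd v) else 0)"

lemma sum_Pow_pairing_weight_Min:
  fixes G :: "nat set \<Rightarrow> int"
  assumes R: "finite R" "i \<in> R" "\<forall>x\<in>R. i \<le> x" and A: "A \<subseteq> R - {i}"
  shows "(\<Sum>B\<in>Pow A. pairing_weight s (R - B) * G B) =
    of_bool (Suc i \<in> R) * s * (\<Sum>B\<in>Pow (A - {Suc i}). pairing_weight s (R - {i, Suc i} - B) * G B)"
proof -
  define h where "h B = pairing_weight s (R - {i, Suc i} - B) * G B" for B
  have "pairing_weight s (R - B) * G B = (if Suc i \<notin> B then of_bool (Suc i \<in> R) * s * h B else 0)"
    if "B \<in> Pow A" for B
  proof -
    have "pairing_weight s (R - B) =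
        (if Suc i \<in> R - B then s * pairing_weight s (R - B - {i, Suc i}) else 0)"
      using that R A by (intro pairing_weight_Min) auto
    moreover have "R - B - {i, Suc i} = R - {i, Suc i} - B"
      by auto
    ultimately show ?thesis
      by (simp add: h_def)
  qed
  then have "(\<Sum>B\<in>Pow A. pairing_weight s (R - B) * G B) =
      (\<Sum>B\<in>Pow A. if Suc i \<notin> B then of_bool (Suc i \<in> R) * s * h B else 0)"
    by (rule sum.cong [OF refl])
  also have "\<dots> = (\<Sum>B\<in>{B \<in> Pow A. Suc i \<notin> B}. of_bool (Suc i \<in> R) * s * h B)"
    using A R(1) finite_subset by (intro sum.inter_filter [symmetric]) auto
  also have "{B \<in> Pow A. Suc i \<notin> B} = Pow (A - {Suc i})"
    by auto
  finally show ?thesis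
    by (simp add: h_def sum_distrib_left mult.assoc)
qed

lemma sum_Pow_Int_pairing_weight_Min:
  fixes G :: "nat set \<Rightarrow> int"
  assumes R: "finite R" "i \<in> R" "\<forall>x\<in>R. i \<le> x"
  shows "(\<Sum>B\<in>Pow (R \<inter> S). pairing_weight s (R - B) * G (S - B)) =
    (if i \<in> S then (\<Sum>B\<in>Pow ((R - {i}) \<inter> (S - {i})). pairing_weight s (R - {i} - B) * G (S - {i} - B))
     else 0)
    + (if Suc i \<in> R then s * (\<Sum>B\<in>Pow ((R - {i, Suc i}) \<inter> S).
         pairing_weight s (R - {i, Suc i} - B) * G (S - B)) else 0)"
proof -
  define A where "A = (R - {i}) \<inter> (S - {i})"
  define f where "f B = pairing_weight s (R - B) * G (S - B)" for B
  have "sum f (Pow (R \<inter> S)) = (if i \<in> S then (\<Sum>B\<in>Pow A. f (insert i B)) else 0) + sum f (Pow A)"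
  proof (cases "i \<in> S")
    case True
    then have "R \<inter> S = insert i A" "finite A" "i \<notin> A"
      using R(1,2) by (auto simp: A_def)
    then show ?thesis
      using True by (simp add: sum_Pow_insert)
  next
    case False
    then have "R \<inter> S = A"
      by (auto simp: A_def)
    then show ?thesis
      using False by simp
  qed
  moreover have "f (insert i B) = pairing_weight s (R - {i} - B) * G (S - {i} - B)" for B
  proof -
    have "R - insert i B = R - {i} - B" "S - insert i B = S - {i} - B"
      by auto
    then show ?thesis
      by (simp add: f_def)
  qed
  moreover have "A - {Suc i} = (R - {i, Suc i}) \<inter> S"
    by (auto simp: A_def)
  ultimately show ?thesis
    using sum_Pow_pairing_weight_Min[OF R, of A s "\<lambda>B. G (S - B)"]
    by (simp add: f_def A_def add.commute)
qed

locale column_signed_grid =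
  fixes m w :: nat and \<sigma> :: "nat \<Rightarrow> int" and E :: "sedge list"
  assumes loopless: "loopless E"
    and edge_weight_grid: "\<And>v u. v \<in> {1..m} \<times> {1..w} \<Longrightarrow> u \<in> {1..m} \<times> {1..w} \<Longrightarrow> v \<noteq> u \<Longrightarrow>
      edge_weight E v u = grid_weight \<sigma> v u"
begin

definition tail_vertices :: "nat \<Rightarrow> nat set \<Rightarrow> nat set \<Rightarrow> vertex set" where
  "tail_vertices j R S = R \<times> {j} \<union> S \<times> {Suc j} \<union> {1..m} \<times> {j + 2..w}"

lemma Msum_tail_vertices_Min:
  assumes j: "1 \<le> j" "j \<le> w" and RS: "R \<subseteq> {1..m}" "S \<subseteq> {1..m}" "j < w \<or> S = {}"
    and i: "i \<in> R" "\<forall>x\<in>R. i \<le> x"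
  shows "Msum (tail_vertices j R S, E) =
    (if i \<in> S then Msum (tail_vertices j (R - {i}) (S - {i}), E) else 0)
    + (if Suc i \<in> R then \<sigma> j * Msum (tail_vertices j (R - {i, Suc i}) S, E) else 0)"
proof -
  define V where "V = tail_vertices j R S"
  define v where "v = (i, j)"
  have V_grid: "V \<subseteq> {1..m} \<times> {1..w}"
    using j RS by (auto simp: V_def tail_vertices_def)
  have finV: "finite V"
    using V_grid by (rule finite_subset) simp
  have vV: "v \<in> V"
    using i by (simp add: V_def tail_vertices_def v_def)
  have weight: "edge_weight E v u = grid_weight \<sigma> v u" if "u \<in> V - {v}" for u
    using that vV V_grid by (intro edge_weight_grid) auto
  have "edge_weight E v u * Msum (V - {v, u}, E) = 0"
    if "u \<in> V - {v}" "u \<noteq> (i, Suc j)" "u \<noteq> (Suc i, j)" for u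
    using that i RS weight[OF that(1)] by (auto simp: V_def tail_vertices_def v_def grid_weight_def)
  then have "Msum (V, E) =
      (\<Sum>u\<in>(V - {v}) \<inter> {(i, Suc j), (Suc i, j)}. edge_weight E v u * Msum (V - {v, u}, E))"
    unfolding Msum_expand_vertex[OF finV vV loopless]
    by (intro sum.mono_neutral_right) (auto simp: finV)
  moreover have "(i, Suc j) \<in> V - {v} \<longleftrightarrow> i \<in> S" "(Suc i, j) \<in> V - {v} \<longleftrightarrow> Suc i \<in> R"
    by (auto simp: V_def tail_vertices_def v_def)
  moreover have "V - {v, (i, Suc j)} = tail_vertices j (R - {i}) (S - {i})"
    "V - {v, (Suc i, j)} = tail_vertices j (R - {i, Suc i}) S"
    by (auto simp: V_def tail_vertices_def v_def)
  ultimately show ?thesis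
    using weight by (auto simp: Int_insert_right grid_weight_def v_def V_def)
qed

lemma Msum_tail_vertices:
  assumes "1 \<le> j" "j \<le> w" "R \<subseteq> {1..m}" "S \<subseteq> {1..m}" "j < w \<or> S = {}"
  shows "Msum (tail_vertices j R S, E) =
    (\<Sum>B\<in>Pow (R \<inter> S). pairing_weight (\<sigma> j) (R - B) * Msum (tail_vertices j {} (S - B), E))"
  using assms(3-5)
proof (induction "card R" arbitrary: R S rule: less_induct)
  case less
  have fin: "finite R"
    using less.prems(1) finite_subset by blast
  show ?case
  proof (cases "R = {}")
    case False
    define i where "i = Min R"
    have iR: "i \<in> R" and i_min: "\<forall>x\<in>R. i \<le> x"
      using False fin by (auto simp: i_def)
    have "R - {i} \<subset> R" "R - {i, Suc i} \<subset> R"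
      using iR by auto
    then have "card (R - {i}) < card R" "card (R - {i, Suc i}) < card R"
      using fin by (simp_all only: psubset_card_mono)
    note IH = less.hyps[OF this(1), of "S - {i}"] less.hyps[OF this(2), of S]
    have "i \<in> S \<Longrightarrow> Msum (tail_vertices j (R - {i}) (S - {i}), E) =
        (\<Sum>B\<in>Pow ((R - {i}) \<inter> (S - {i})).
          pairing_weight (\<sigma> j) (R - {i} - B) * Msum (tail_vertices j {} (S - {i} - B), E))"
      "Msum (tail_vertices j (R - {i, Suc i}) S, E) =
        (\<Sum>B\<in>Pow ((R - {i, Suc i}) \<inter> S).
          pairing_weight (\<sigma> j) (R - {i, Suc i} - B) * Msum (tail_vertices j {} (S - B), E))"
      using IH less.prems by auto
    then show ?thesis
      unfolding Msum_tail_vertices_Min[OF assms(1,2) less.prems iR i_min]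
        sum_Pow_Int_pairing_weight_Min[OF fin iR i_min, where G = "\<lambda>X. Msum (tail_vertices j {} X, E)"]
      by simp
  qed simp
qed

lemma Msum_columns_from:
  assumes "1 \<le> j" "j \<le> w" "R \<subseteq> {1..m}"
  shows "Msum (R \<times> {j} \<union> {1..m} \<times> {Suc j..w}, E) =
    foldr (transfer m) (map \<sigma> [j..<Suc w]) (full_rows m) R"
  using assms
proof (induction "w - j" arbitrary: j R)
  case 0
  then have j: "j = w"
    by simp
  have "transfer m (\<sigma> j) (full_rows m) R = pairing_weight (\<sigma> j) R"
    using 0 by (simp add: transfer_full_rows)
  moreover have "R \<times> {j} \<union> {1..m} \<times> {Suc j..w} = tail_vertices j R {}" "tail_vertices j {} {} = {}"
    using j by (auto simp: tail_vertices_def)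
  ultimately show ?case
    using Msum_tail_vertices[of j R "{}"] 0 j by (simp add: Msum_no_vertices)
next
  case (Suc k)
  then have j: "j < w"
    by simp
  have "R \<times> {j} \<union> {1..m} \<times> {Suc j..w} = tail_vertices j R {1..m}"
    using j by (auto simp: tail_vertices_def)
  moreover have "tail_vertices j {} X = X \<times> {Suc j} \<union> {1..m} \<times> {Suc (Suc j)..w}" for X
    by (auto simp: tail_vertices_def)
  moreover have "Msum (X \<times> {Suc j} \<union> {1..m} \<times> {Suc (Suc j)..w}, E) =
      foldr (transfer m) (map \<sigma> [Suc j..<Suc w]) (full_rows m) X" if "X \<subseteq> {1..m}" for X
    using Suc j that by simp
  moreover have "R \<inter> {1..m} = R"
    using Suc.prems by auto
  ultimately show ?case
    using Msum_tail_vertices[of j R "{1..m}"] Suc.prems j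
    by (simp add: transfer_subset upt_conv_Cons)
qed

theorem Msum_grid_transfer:
  assumes "1 \<le> w"
  shows "Msum ({1..m} \<times> {1..w}, E) = foldr (transfer m) (map \<sigma> [1..<Suc w]) (full_rows m) {1..m}"
proof -
  have "{1..m} \<times> {1..w} = {1..m} \<times> {1} \<union> {1..m} \<times> {Suc 1..w}"
    using assms by auto
  then show ?thesis
    using Msum_columns_from[of 1 "{1..m}"] assms by simp
qed

end

section \<open>Adjoining grids\<close>

lemma edge_weight_append: "edge_weight (E1 @ E2) v u = edge_weight E1 v u + edge_weight E2 v u"
  by (simp add: edge_weight_def)

lemma edge_weight_commute: "edge_weight E v u = edge_weight E u v"
  unfolding edge_weight_def by (rule arg_cong[where f = sum_list]) auto

definition edges_within :: "vertex set \<Rightarrow> sedge list \<Rightarrow> bool" where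
  "edges_within V E \<longleftrightarrow> (\<forall>e\<in>set E. fst e \<in> V \<and> fst (snd e) \<in> V)"

lemma edge_weight_outside:
  assumes "edges_within V E" "v \<notin> V"
  shows "edge_weight E v u = 0" "edge_weight E u v = 0"
proof -
  have "edge_weight E v u = 0"
    using assms unfolding edge_weight_def edges_within_def by (induction E) auto
  then show "edge_weight E v u = 0" "edge_weight E u v = 0"
    by (simp_all add: edge_weight_commute)
qed

definition shift_edge :: "nat \<Rightarrow> sedge \<Rightarrow> sedge" where
  "shift_edge w = (\<lambda>(u, v, s). (shift_v w u, shift_v w v, s))"

lemma edge_weight_shift:
  "edge_weight (map (shift_edge w) E) (shift_v w v) (shift_v w u) = edge_weight E v u"
proof -
  have "inj (shift_v w)"
    by (rule injI) (auto simp: shift_v_def prod_eq_iff)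
  then show ?thesis
    unfolding edge_weight_def by (induction E) (auto simp: shift_edge_def inj_eq)
qed

lemma edges_within_shift: "edges_within V E \<Longrightarrow> edges_within (shift_v w ` V) (map (shift_edge w) E)"
  by (auto simp: edges_within_def shift_edge_def)

lemma loopless_append: "loopless (E1 @ E2) \<longleftrightarrow> loopless E1 \<and> loopless E2"
  by (auto simp: loopless_def)

lemma loopless_shift: "loopless E \<Longrightarrow> loopless (map (shift_edge w) E)"
  by (auto simp: loopless_def shift_edge_def shift_v_def prod_eq_iff)

definition bridge_edges :: "nat \<Rightarrow> nat \<Rightarrow> sedge list" where
  "bridge_edges m w = [((i, w), (i, w + 1), 1). i \<leftarrow> [1..<m + 1]]"

lemma edge_weight_single:
  "edge_weight [(a, b, s)] v u = (if (a = v \<and> b = u) \<or> (a = u \<and> b = v) then s else 0)"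
  by (simp add: edge_weight_def)

lemma edge_weight_concat: "edge_weight (concat Es) v u = (\<Sum>E\<leftarrow>Es. edge_weight E v u)"
  by (induction Es) (simp_all add: edge_weight_def)

lemma edge_weight_concat_map_upt:
  "edge_weight (concat (map F [a..<b])) v u = (\<Sum>i\<in>{a..<b}. edge_weight (F i) v u)"
  by (simp add: edge_weight_concat sum_set_upt_conv_sum_list_nat [symmetric] comp_def del: upt_Suc)

lemma edge_weight_map_upt:
  "edge_weight (map F [a..<b]) v u = (\<Sum>i\<in>{a..<b}. edge_weight [F i] v u)"
  using edge_weight_concat_map_upt[of "\<lambda>i. [F i]"] by simp

lemma edge_weight_bridge_edges:
  "edge_weight (bridge_edges m w) (i0, c0) (i1, c1) =
    of_bool (i0 = i1 \<and> 1 \<le> i0 \<and> i0 \<le> m \<and> ((c0 = w \<and> c1 = w + 1) \<or> (c1 = w \<and> c0 = w + 1)))"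
proof -
  have "bridge_edges m w = concat (map (\<lambda>i. [((i, w), (i, w + 1), 1)]) [1..<m + 1])"
    by (simp add: bridge_edges_def del: upt_Suc)
  then have "edge_weight (bridge_edges m w) (i0, c0) (i1, c1) = (\<Sum>i\<in>{1..<m + 1}.
      if i = i0 then of_bool (i0 = i1 \<and> ((c0 = w \<and> c1 = w + 1) \<or> (c1 = w \<and> c0 = w + 1))) else 0)"
    by (simp only: edge_weight_concat_map_upt edge_weight_single) (intro sum.cong; auto)
  then show ?thesis
    by auto
qed

lemma loopless_bridge_edges: "loopless (bridge_edges m w)"
  by (auto simp: loopless_def bridge_edges_def)

lemma shift_grid_vertices: "shift_v w ` grid_vertices m w' = {1..m} \<times> {w + 1..w + w'}"
proof -
  have "(i, c) \<in> shift_v w ` grid_vertices m w'" if "i \<in> {1..m}" "c \<in> {w + 1..w + w'}" for i c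
    using that by (intro image_eqI[of _ _ "(i, c - w)"]) (auto simp: shift_v_def grid_vertices_def)
  then show ?thesis
    by (auto simp: shift_v_def grid_vertices_def)
qed

lemma adjoin_grid:
  assumes "1 \<le> m" "1 \<le> w1"
  shows "adjoin m (grid_vertices m w1, E1) (grid_vertices m w2, E2) =
    (grid_vertices m (w1 + w2), E1 @ map (shift_edge w1) E2 @ bridge_edges m w1)"
proof -
  have "snd ` grid_vertices m w1 = {1..w1}"
    using assms(1) by (force simp: grid_vertices_def)
  moreover have "Max {1..w1} = w1"
    using assms(2) by (intro Max_eqI) auto
  ultimately have "width (grid_vertices m w1, E1) = w1"
    by (simp add: width_def)
  moreover have "grid_vertices m w1 \<union> shift_v w1 ` grid_vertices m w2 = grid_vertices m (w1 + w2)"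
    unfolding shift_grid_vertices by (auto simp: grid_vertices_def)
  ultimately show ?thesis
    by (simp add: adjoin_def shift_edge_def bridge_edges_def)
qed

lemma edge_weight_shift_grid:
  assumes "edges_within (grid_vertices m w') E"
  shows "edge_weight (map (shift_edge w) E) (i0, c0) (i1, c1) =
    (if w < c0 \<and> w < c1 then edge_weight E (i0, c0 - w) (i1, c1 - w) else 0)"
proof (cases "w < c0 \<and> w < c1")
  case True
  then show ?thesis
    using edge_weight_shift[of w E "(i0, c0 - w)" "(i1, c1 - w)"] by (simp add: shift_v_def)
next
  case False
  have "edges_within ({1..m} \<times> {w + 1..w + w'}) (map (shift_edge w) E)"
    using edges_within_shift[OF assms] by (simp add: shift_grid_vertices)
  then show ?thesis
    using False edge_weight_outside[of _ "map (shift_edge w) E"] by auto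
qed

lemma column_signed_grid_adjoin:
  assumes G1: "column_signed_grid m w1 \<sigma>1 E1" "edges_within (grid_vertices m w1) E1"
    and G2: "column_signed_grid m w2 \<sigma>2 E2" "edges_within (grid_vertices m w2) E2"
  defines "\<sigma> \<equiv> \<lambda>c. if c \<le> w1 then \<sigma>1 c else \<sigma>2 (c - w1)"
  shows "column_signed_grid m (w1 + w2) \<sigma> (E1 @ map (shift_edge w1) E2 @ bridge_edges m w1)"
proof
  show "loopless (E1 @ map (shift_edge w1) E2 @ bridge_edges m w1)"
    using column_signed_grid.loopless[OF G1(1)] column_signed_grid.loopless[OF G2(1)]
    by (simp add: loopless_append loopless_shift loopless_bridge_edges)
next
  fix v u
  assume v: "v \<in> {1..m} \<times> {1..w1 + w2}" and u: "u \<in> {1..m} \<times> {1..w1 + w2}" and "v \<noteq> u"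
  obtain i0 c0 i1 c1 where vu: "v = (i0, c0)" "u = (i1, c1)"
    by fastforce
  have left: "edge_weight E1 v u = (if c0 \<le> w1 \<and> c1 \<le> w1 then grid_weight \<sigma>1 v u else 0)"
    using v u vu \<open>v \<noteq> u\<close> edge_weight_outside[OF G1(2)]
    by (auto simp: grid_vertices_def intro: column_signed_grid.edge_weight_grid[OF G1(1)])
  have "edge_weight E2 (i0, c0 - w1) (i1, c1 - w1) = grid_weight \<sigma>2 (i0, c0 - w1) (i1, c1 - w1)"
    if "w1 < c0" "w1 < c1"
    using that v u vu \<open>v \<noteq> u\<close> by (intro column_signed_grid.edge_weight_grid[OF G2(1)]) auto
  then have right: "edge_weight (map (shift_edge w1) E2) v u =
      (if w1 < c0 \<and> w1 < c1 then grid_weight \<sigma>2 (i0, c0 - w1) (i1, c1 - w1) else 0)"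
    using vu edge_weight_shift_grid[OF G2(2), of w1 i0 c0 i1 c1] by simp
  have bridge: "edge_weight (bridge_edges m w1) v u =
      of_bool (i0 = i1 \<and> ((c0 = w1 \<and> c1 = w1 + 1) \<or> (c1 = w1 \<and> c0 = w1 + 1)))"
    using v vu by (auto simp: edge_weight_bridge_edges)
  show "edge_weight (E1 @ map (shift_edge w1) E2 @ bridge_edges m w1) v u = grid_weight \<sigma> v u"
    unfolding edge_weight_append left right bridge
    using vu by (auto simp: grid_weight_def \<sigma>_def)
qed

section \<open>The graphs G(m,n)\<close>

lemma sum_sum_delta:
  fixes c :: "'a::comm_monoid_add"
  assumes "finite A" "finite B"
  shows "(\<Sum>i\<in>A. \<Sum>j\<in>B. if i = x \<and> j = y then c else 0) = (if x \<in> A \<and> y \<in> B then c else 0)"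
proof -
  have "(\<Sum>i\<in>A. \<Sum>j\<in>B. if i = x \<and> j = y then c else 0) =
      (\<Sum>i\<in>A. if i = x then \<Sum>j\<in>B. if j = y then c else 0 else 0)"
    by (intro sum.cong) auto
  then show ?thesis
    using assms by simp
qed

lemma edge_weight_horiz_edges:
  assumes "(i0, c0) \<in> grid_vertices m w" "(i1, c1) \<in> grid_vertices m w"
  shows "edge_weight (horiz_edges m w) (i0, c0) (i1, c1) =
    of_bool (i0 = i1 \<and> (c1 = c0 + 1 \<or> c0 = c1 + 1))"
proof -
  have "edge_weight (horiz_edges m w) (i0, c0) (i1, c1) = (\<Sum>i\<in>{1..<m + 1}. \<Sum>j\<in>{1..<w}.
      (if i = i0 \<and> j = c0 then of_bool (i1 = i0 \<and> c1 = c0 + 1) else 0) +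
      (if i = i0 \<and> j = c1 then of_bool (i1 = i0 \<and> c0 = c1 + 1) else 0))"
    unfolding horiz_edges_def edge_weight_concat_map_upt edge_weight_map_upt edge_weight_single
    by (intro sum.cong) auto
  also have "\<dots> = of_bool (i0 = i1 \<and> (c1 = c0 + 1 \<or> c0 = c1 + 1))"
    using assms by (simp add: sum.distrib sum_sum_delta grid_vertices_def) auto
  finally show ?thesis .
qed

definition col_sign :: "nat \<Rightarrow> nat \<Rightarrow> int \<Rightarrow> nat \<Rightarrow> int" where
  "col_sign lo hi s c = (if lo \<le> c \<and> c < hi then s else 0)"

lemma edge_weight_vert_edges:
  assumes "(i0, c0) \<in> grid_vertices m w" "(i1, c1) \<in> grid_vertices m w"
  shows "edge_weight (vert_edges m [lo..<hi] s) (i0, c0) (i1, c1) =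
    (if c0 = c1 \<and> (i1 = i0 + 1 \<or> i0 = i1 + 1) then col_sign lo hi s c0 else 0)"
proof -
  have "edge_weight (vert_edges m [lo..<hi] s) (i0, c0) (i1, c1) = (\<Sum>i\<in>{1..<m}. \<Sum>j\<in>{lo..<hi}.
      (if i = i0 \<and> j = c0 then (if c1 = c0 \<and> i1 = i0 + 1 then s else 0) else 0) +
      (if i = i1 \<and> j = c1 then (if c0 = c1 \<and> i0 = i1 + 1 then s else 0) else 0))"
    unfolding vert_edges_def edge_weight_concat_map_upt edge_weight_map_upt edge_weight_single
    by (intro sum.cong) auto
  also have "\<dots> = (if c0 = c1 \<and> (i1 = i0 + 1 \<or> i0 = i1 + 1) then col_sign lo hi s c0 else 0)"
    using assms by (simp add: sum.distrib sum_sum_delta grid_vertices_def col_sign_def) auto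
  finally show ?thesis .
qed

lemma column_signed_grid_horiz_vert:
  "column_signed_grid m w (col_sign lo hi s) (horiz_edges m w @ vert_edges m [lo..<hi] s)"
proof
  show "loopless (horiz_edges m w @ vert_edges m [lo..<hi] s)"
    by (auto simp: loopless_def horiz_edges_def vert_edges_def)
next
  fix v u
  assume vu: "v \<in> {1..m} \<times> {1..w}" "u \<in> {1..m} \<times> {1..w}" "v \<noteq> u"
  obtain i0 c0 i1 c1 where v: "v = (i0, c0)" and u: "u = (i1, c1)"
    by fastforce
  have g: "(i0, c0) \<in> grid_vertices m w" "(i1, c1) \<in> grid_vertices m w"
    using vu v u by (simp_all add: grid_vertices_def)
  show "edge_weight (horiz_edges m w @ vert_edges m [lo..<hi] s) v u =
    grid_weight (col_sign lo hi s) v u"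
    unfolding v u edge_weight_append edge_weight_horiz_edges[OF g] edge_weight_vert_edges[OF g]
    by (auto simp: grid_weight_def)
qed

lemma edges_within_horiz_vert:
  "1 \<le> lo \<Longrightarrow> hi \<le> w + 1 \<Longrightarrow> edges_within (grid_vertices m w) (horiz_edges m w @ vert_edges m [lo..<hi] s)"
  by (auto simp: edges_within_def grid_vertices_def horiz_edges_def vert_edges_def)

definition sign_word :: "int \<Rightarrow> int list" where
  "sign_word n = (if 1 \<le> n then replicate (nat n) 1 else 0 # replicate (nat (- n)) (-1) @ [0])"

lemma map_col_sign_upt: "map (col_sign lo hi s) [lo..<hi] = replicate (hi - lo) s"
proof -
  have "map (col_sign lo hi s) [lo..<hi] = map (\<lambda>_. s) [lo..<hi]"
    by (intro map_cong) (auto simp: col_sign_def)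
  then show ?thesis
    by (simp add: map_replicate_const)
qed

lemma Gmn_column_signed_grid:
  obtains w \<sigma> E where "Gmn m n = (grid_vertices m w, E)" "1 \<le> w" "column_signed_grid m w \<sigma> E"
    "edges_within (grid_vertices m w) E" "map \<sigma> [1..<Suc w] = sign_word n"
proof (cases "1 \<le> n")
  case True
  let ?w = "nat n"
  have Gmn: "Gmn m n = (grid_vertices m ?w, horiz_edges m ?w @ vert_edges m [1..<Suc ?w] 1)"
    using True by (simp add: Gmn_def)
  have word: "map (col_sign 1 (Suc ?w) 1) [1..<Suc ?w] = sign_word n"
    using True map_col_sign_upt[of 1 "Suc ?w" 1] by (simp add: sign_word_def del: upt_Suc)
  show ?thesis
    by (rule that[OF Gmn _ column_signed_grid_horiz_vert edges_within_horiz_vert word])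
      (use True in simp_all)
next
  case False
  let ?k = "nat (- n)"
  have Gmn: "Gmn m n =
      (grid_vertices m (?k + 2), horiz_edges m (?k + 2) @ vert_edges m [2..<?k + 2] (-1))"
  proof -
    have "nat (2 - n) = ?k + 2" "nat (1 - n) + 1 = ?k + 2"
      using False by simp_all
    then show ?thesis
      using False by (simp add: Gmn_def del: upt_Suc)
  qed
  have word: "map (col_sign 2 (?k + 2) (-1)) [1..<Suc (?k + 2)] = sign_word n"
  proof -
    have "[1..<Suc (?k + 2)] = 1 # [2..<?k + 2] @ [?k + 2]"
      by (subst upt_conv_Cons) (simp_all add: numeral_2_eq_2)
    then show ?thesis
      using False map_col_sign_upt[of 2 "?k + 2" "-1"]
      by (simp add: col_sign_def sign_word_def del: upt_Suc)
  qed
  show ?thesis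
    by (rule that[OF Gmn _ column_signed_grid_horiz_vert edges_within_horiz_vert word]) simp_all
qed

lemma map_upt_piecewise:
  "map (\<lambda>c. if c \<le> w1 then \<sigma>1 c else \<sigma>2 (c - w1)) [1..<Suc (w1 + w2)] =
    map \<sigma>1 [1..<Suc w1] @ map \<sigma>2 [1..<Suc w2]"
proof (induction w2)
  case 0
  show ?case
    by (simp del: upt_Suc cong: map_cong)
next
  case (Suc w2)
  then show ?case
    by simp
qed

lemma Msum_Gmn: "Msum (Gmn m n) = foldr (transfer m) (sign_word n) (full_rows m) {1..m}"
proof -
  obtain w \<sigma> E where G: "Gmn m n = (grid_vertices m w, E)" "1 \<le> w" "column_signed_grid m w \<sigma> E"
    "map \<sigma> [1..<Suc w] = sign_word n"
    by (rule Gmn_column_signed_grid)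
  show ?thesis
    unfolding G(1) grid_vertices_def column_signed_grid.Msum_grid_transfer[OF G(3,2)] G(4) ..
qed

lemma Msum_adjoin_Gmn:
  assumes "1 \<le> m"
  shows "Msum (adjoin m (Gmn m n1) (Gmn m n2)) =
    foldr (transfer m) (sign_word n1 @ sign_word n2) (full_rows m) {1..m}"
proof -
  obtain w1 \<sigma>1 E1 where G1: "Gmn m n1 = (grid_vertices m w1, E1)" "1 \<le> w1" "column_signed_grid m w1 \<sigma>1 E1"
    "edges_within (grid_vertices m w1) E1" "map \<sigma>1 [1..<Suc w1] = sign_word n1"
    by (rule Gmn_column_signed_grid)
  obtain w2 \<sigma>2 E2 where G2: "Gmn m n2 = (grid_vertices m w2, E2)" "1 \<le> w2" "column_signed_grid m w2 \<sigma>2 E2"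
    "edges_within (grid_vertices m w2) E2" "map \<sigma>2 [1..<Suc w2] = sign_word n2"
    by (rule Gmn_column_signed_grid)
  have grid: "column_signed_grid m (w1 + w2) (\<lambda>c. if c \<le> w1 then \<sigma>1 c else \<sigma>2 (c - w1))
      (E1 @ map (shift_edge w1) E2 @ bridge_edges m w1)"
    using G1(3,4) G2(3,4) by (rule column_signed_grid_adjoin)
  have "Msum (adjoin m (Gmn m n1) (Gmn m n2)) =
      Msum (grid_vertices m (w1 + w2), E1 @ map (shift_edge w1) E2 @ bridge_edges m w1)"
    by (simp add: G1(1) G2(1) adjoin_grid[OF assms G1(2)])
  also have "\<dots> = foldr (transfer m) (map (\<lambda>c. if c \<le> w1 then \<sigma>1 c else \<sigma>2 (c - w1)) [1..<Suc (w1 + w2)])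
      (full_rows m) {1..m}"
    unfolding grid_vertices_def using G1(2)
    by (intro column_signed_grid.Msum_grid_transfer[OF grid]) simp
  also have "\<dots> = foldr (transfer m) (sign_word n1 @ sign_word n2) (full_rows m) {1..m}"
    by (simp only: map_upt_piecewise G1(5) G2(5))
  finally show ?thesis .
qed

lemma sign_word_neg: "n \<le> 0 \<Longrightarrow> sign_word n = 0 # replicate (nat (- n)) (-1) @ [0]"
  by (simp add: sign_word_def)

lemma Msum_adjoin_Gmn_shift:
  assumes "1 \<le> m" "1 \<le> a" "1 \<le> b"
  shows "Msum (adjoin m (Gmn m a) (Gmn m (-b))) = Msum (adjoin m (Gmn m (a - 1)) (Gmn m (-(b - 1))))"
proof -
  define p q where "p = nat (a - 1)" and "q = nat (b - 1)"
  then have a: "a = int p + 1" and b: "b = int q + 1"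
    using assms by simp_all
  define rest :: "int list" where "rest = replicate q (-1) @ [0]"
  have "sign_word a @ sign_word (- b) = replicate p 1 @ 1 # 0 # (-1) # rest"
    by (simp add: a b sign_word_def rest_def nat_add_distrib replicate_append_same [symmetric])
  \<comment> \<open>for a = 1 the first factor is G(m,0), with the word 0 0\<close>
  moreover have "sign_word (a - 1) @ sign_word (- (b - 1)) =
      (if p = 0 then [] @ 0 # 0 # 0 # rest else replicate p 1 @ 0 # rest)"
    by (simp add: a b sign_word_def rest_def)
  ultimately show ?thesis
    by (simp add: Msum_adjoin_Gmn[OF assms(1)] foldr_transfer_collapse del: append.simps foldr_append)
qed

lemma Msum_adjoin_Gmn_nonpos:
  assumes "1 \<le> m" "0 \<le> a" "0 \<le> b"
  shows "Msum (adjoin m (Gmn m (-a)) (Gmn m (-b))) = Msum (Gmn m (-(a + b)))"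
proof -
  have "sign_word (- a) @ sign_word (- b) =
      (0 # replicate (nat a) (-1)) @ 0 # 0 # replicate (nat b) (-1) @ [0]"
    "sign_word (- (a + b)) = (0 # replicate (nat a) (-1)) @ replicate (nat b) (-1) @ [0]"
    using assms by (simp_all add: sign_word_neg nat_add_distrib replicate_add append_replicate_commute)
  then show ?thesis
    by (simp only: Msum_adjoin_Gmn[OF assms(1)] Msum_Gmn foldr_transfer_drop_zeros[OF list.distinct(2)])
qed

theorem mainTheorem4:
  fixes m :: nat
  assumes "m \<ge> 1"
  shows "(\<forall>a b :: int. a \<ge> 1 \<longrightarrow> b \<ge> 1 \<longrightarrow>
            Msum (adjoin m (Gmn m a) (Gmn m (-b))) =
            Msum (adjoin m (Gmn m (a - 1)) (Gmn m (-(b - 1)))))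
       \<and> (\<forall>a b :: int. a \<ge> 0 \<longrightarrow> b \<ge> 0 \<longrightarrow>
            Msum (adjoin m (Gmn m (-a)) (Gmn m (-b))) = Msum (Gmn m (-(a + b))))"
  using Msum_adjoin_Gmn_shift[OF assms] Msum_adjoin_Gmn_nonpos[OF assms] by blast

end
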